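(* For every $s\in\Sigma^n$, the arc $(s,R(s))$ is a valid arc of $B_n$ with respect to the depth assignment $d$.
   Context: Let $k\ge 2$, $\Sigma=\{0,\dots,k-1\}$ with arithmetic modulo $k$, $n\ge 1$, and $s=s[0]\cdots s[n-1]\in\Sigma^n$. The de Bruijn graph $B_n$ has node set $\Sigma^n$ and an arc $(s,t)$ iff $s[1]\cdots s[n-1]=t[0]\cdots t[n-2]$. For an integer $j$, $ICR_j(s)=s[1]\cdots s[n-1](s[0]+j)$. Let $\mathbf N$ be the set of cycles (orbits) of the permutation $ICR_1$ of $\Sigma^n$. Let $\mathbf G$ be the directed graph on $\mathbf N$ with an arc $(\mathcal U,\mathcal V)$ iff some $s\in\mathcal U$ has $ICR_0(s)\in\mathcal V$. Let $\mathbf T$ be a directed spanning tree of $\mathbf G$ rooted at $\mathcal R\in\mathbf N$ (arcs from parent to child), with parent map $parent$; the depth of a cycle is its distance from the root (root has depth $0$). For each $\mathcal U\ne\mathcal R$, a representative $rep(\mathcal U)$ is a fixed node $s\in\mathcal U$ with $ICR_0^{-1}(s)\in parent(\mathcal U)$ and $s[n-1]\equiv \text{depth}(\mathcal U)\pmod k$ (assumed to exist and fixed). $\mathrm{Reps}$ is the set of all representatives. Define $R(s)=ICR_0(s)$ if $ICR_0(s)\in\mathrm{Reps}$; $R(s)=ICR_2(s)$ if $ICR_1(s)\in\mathrm{Reps}$; $R(s)=ICR_1(s)$ otherwise. The depth assignment $d:\Sigma^n\to\Sigma$ is $d_s=p+1 \pmod k$, where $p$ is the depth in $\mathbf T$ of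 the cycle containing $s$. An arc $(s,t)$ of $B_n$ is valid if, with $b=s[0]$ and $c=t[n-1]$, either ($b+1=c$ and $d_s=d_t$) or ($b+1=d_t$ and $c=d_s$). *)

theory Defs
  imports Main
begin

definition words :: "nat \<Rightarrow> nat \<Rightarrow> nat list set" where
  "words k n = {s. length s = n \<and> (\<forall>x\<in>set s. x < k)}"

definition ICR :: "nat \<Rightarrow> nat \<Rightarrow> nat list \<Rightarrow> nat list" where
  "ICR k j s = tl s @ [(hd s + j) mod k]"

definition ICR0_inv :: "nat list \<Rightarrow> nat list" where
  "ICR0_inv s = last s # butlast s"

definition cyc :: "nat \<Rightarrow> nat list \<Rightarrow> nat list set" where
  "cyc k s = {(ICR k 1 ^^ m) s | m. True}"

definition cycles :: "nat \<Rightarrow> nat \<Rightarrow> nat list set set" where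
  "cycles k n = cyc k ` words k n"

definition G_arc :: "nat \<Rightarrow> nat list set \<Rightarrow> nat list set \<Rightarrow> bool" where
  "G_arc k U V \<longleftrightarrow> (\<exists>s\<in>U. ICR k 0 s \<in> V)"

text \<open>A directed spanning tree of G rooted at root, given by its parent map:
  every non-root cycle has a parent cycle which is a G-in-neighbour, and
  iterating the parent map from any cycle reaches the root.\<close>
definition spanning_tree ::
  "nat \<Rightarrow> nat \<Rightarrow> nat list set \<Rightarrow> (nat list set \<Rightarrow> nat list set) \<Rightarrow> bool" where
  "spanning_tree k n root parent \<longleftrightarrow>
     root \<in> cycles k n \<and>
     (\<forall>U\<in>cycles k n. U \<noteq> root \<longrightarrow>
        parent U \<in> cycles k n \<and> G_arc k (parent U) U) \<and>
     (\<forall>U\<in>cycles k n. \<exists>m. (parent ^^ m) U = root)"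

definition depth :: "nat list set \<Rightarrow> (nat list set \<Rightarrow> nat list set) \<Rightarrow> nat list set \<Rightarrow> nat" where
  "depth root parent U = (LEAST m. (parent ^^ m) U = root)"

definition valid_reps ::
  "nat \<Rightarrow> nat \<Rightarrow> nat list set \<Rightarrow> (nat list set \<Rightarrow> nat list set)
     \<Rightarrow> (nat list set \<Rightarrow> nat list) \<Rightarrow> bool" where
  "valid_reps k n root parent rep \<longleftrightarrow>
     (\<forall>U\<in>cycles k n. U \<noteq> root \<longrightarrow>
        rep U \<in> U \<and> ICR0_inv (rep U) \<in> parent U \<and>
        last (rep U) = depth root parent U mod k)"

definition Reps :: "nat \<Rightarrow> nat \<Rightarrow> nat list set \<Rightarrow> (nat list set \<Rightarrow> nat list) \<Rightarrow> nat list set" where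
  "Reps k n root rep = rep ` (cycles k n - {root})"

definition Rsucc ::
  "nat \<Rightarrow> nat \<Rightarrow> nat list set \<Rightarrow> (nat list set \<Rightarrow> nat list) \<Rightarrow> nat list \<Rightarrow> nat list" where
  "Rsucc k n root rep s =
     (if ICR k 0 s \<in> Reps k n root rep then ICR k 0 s
      else if ICR k 1 s \<in> Reps k n root rep then ICR k 2 s
      else ICR k 1 s)"

definition dassign ::
  "nat \<Rightarrow> nat list set \<Rightarrow> (nat list set \<Rightarrow> nat list set) \<Rightarrow> nat list \<Rightarrow> nat" where
  "dassign k root parent s = (depth root parent (cyc k s) + 1) mod k"

definition dB_arc :: "nat \<Rightarrow> nat \<Rightarrow> nat list \<Rightarrow> nat list \<Rightarrow> bool" where
  "dB_arc k n s t \<longleftrightarrow> s \<in> words k n \<and> t \<in> words k n \<and> tl s = butlast t"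

definition valid_arc :: "nat \<Rightarrow> nat \<Rightarrow> (nat list \<Rightarrow> nat) \<Rightarrow> nat list \<Rightarrow> nat list \<Rightarrow> bool" where
  "valid_arc k n d s t \<longleftrightarrow> dB_arc k n s t \<and>
     (let b = s ! 0; c = t ! (n - 1) in
       ((b + 1) mod k = c \<and> d s = d t) \<or> ((b + 1) mod k = d t \<and> c = d s))"

end

theory Submission
  imports Defs "HOL-Combinatorics.Orbits"
begin

(* Each branch of R matches one clause of validity, with b = s[0] and arithmetic mod k.
   An ICR_1 step stays inside the cycle of s, so d is unchanged and the appended symbol is b + 1.
   An ICR_0 step onto rep V starts in parent V (as ICR_0^{-1}(rep V) = s) and appends
   b = last (rep V) = depth V mod k; this is d_s, while d_t = depth V + 1 = b + 1.
   If ICR_1 s = rep V, then s lies in V and ICR_2 s = ICR_1 (ICR_0^{-1}(rep V)) lies in parent V,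
   so d_t = depth V = b + 1 and d_s = b + 2 is the appended symbol. *)

lemma self_in_orbit_if_inj_on_finite:
  assumes "finite A" "inj_on f A" "f ` A \<subseteq> A" "x \<in> A"
  shows "x \<in> orbit f x"
proof -
  have "bij_betw f A A"
    using assms(1-3) endo_inj_surj by (simp add: bij_betw_def)
  then have "restrict_id f A permutes A"
    by (rule permutes_restrict_id)
  then have "permutation (restrict_id f A)"
    using assms(1) permutation_permutes by blast
  then have "x \<in> orbit (restrict_id f A) x"
    by (rule permutation_self_in_orbit)
  moreover have "orbit (restrict_id f A) x = orbit f x"
    using assms(3,4) by (intro orbit_cong0) (auto simp: restrict_id_def)
  ultimately show ?thesis
    by simp
qed

lemma orbit_eq_if_mem_orbit:
  assumes "s \<in> orbit f s" "t \<in> orbit f s"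
  shows "orbit f t = orbit f s"
  using assms by (metis cyclic_on_def orbit_cyclic_eq3)

lemma finite_words: "finite (words k n)"
proof (rule finite_subset)
  show "words k n \<subseteq> {xs. set xs \<subseteq> {..<k} \<and> length xs = n}"
    by (auto simp: words_def)
qed (rule finite_lists_length_eq, simp)

lemma ICR_in_words:
  assumes "0 < k" "1 \<le> n" "s \<in> words k n"
  shows "ICR k j s \<in> words k n"
  using assms by (cases s) (auto simp: words_def ICR_def)

lemma inj_on_ICR1_words: "inj_on (ICR k 1) (words k n)"
proof (rule inj_onI)
  fix s t
  assume s: "s \<in> words k n" and t: "t \<in> words k n" and eq: "ICR k 1 s = ICR k 1 t"
  show "s = t"
  proof (cases n)
    case 0
    then show ?thesis using s t by (simp add: words_def)
  next
    case (Suc m)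
    then obtain a as b bs where st: "s = a # as" "t = b # bs"
      using s t by (cases s; cases t) (auto simp: words_def)
    with s t have "a < k" "b < k"
      by (auto simp: words_def)
    moreover from eq st have "(a + 1) mod k = (b + 1) mod k" "as = bs"
      by (auto simp: ICR_def)
    ultimately show ?thesis
      using st by (cases "a + 1 = k"; cases "b + 1 = k") auto
  qed
qed

lemma self_in_orbit_ICR1:
  assumes "0 < k" "1 \<le> n" "s \<in> words k n"
  shows "s \<in> orbit (ICR k 1) s"
proof (rule self_in_orbit_if_inj_on_finite[OF finite_words inj_on_ICR1_words _ assms(3)])
  show "ICR k 1 ` words k n \<subseteq> words k n"
    using assms(1,2) ICR_in_words by blast
qed

lemma ICR1_in_cyc: "y \<in> cyc k s \<Longrightarrow> ICR k 1 y \<in> cyc k s"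
  unfolding cyc_def by (auto intro: exI[of _ "Suc m" for m])

(* The library orbit of s consists of the f^m s with m > 0 only, so it contains s
   just when s is periodic. *)
lemma cyc_eq_orbit:
  assumes "s \<in> orbit (ICR k 1) s"
  shows "cyc k s = orbit (ICR k 1) s"
  unfolding cyc_def using orbit_altdef_self_in[OF assms] by simp

lemma cyc_eq_if_mem:
  assumes "0 < k" "1 \<le> n" "s \<in> words k n" "y \<in> cyc k s"
  shows "cyc k y = cyc k s"
proof -
  let ?f = "ICR k 1"
  have s: "s \<in> orbit ?f s"
    using assms(1-3) by (rule self_in_orbit_ICR1)
  moreover have y: "y \<in> orbit ?f s"
    using assms(4) cyc_eq_orbit[OF s] by simp
  ultimately have "cyc k y = orbit ?f y"
    by (rule cyc_eq_orbit[OF self_in_orbit_trans])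
  also have "\<dots> = orbit ?f s"
    using s y by (rule orbit_eq_if_mem_orbit)
  also have "\<dots> = cyc k s"
    using s by (rule cyc_eq_orbit[symmetric])
  finally show ?thesis .
qed

lemma self_in_cyc: "s \<in> cyc k s"
  unfolding cyc_def by (auto intro: exI[of _ 0])

lemma cyc_ICR1:
  assumes "0 < k" "1 \<le> n" "s \<in> words k n"
  shows "cyc k (ICR k 1 s) = cyc k s"
  using assms ICR1_in_cyc[OF self_in_cyc] by (rule cyc_eq_if_mem)

lemma cyc_eq_if_mem_cycles:
  assumes "0 < k" "1 \<le> n" "U \<in> cycles k n" "y \<in> U"
  shows "cyc k y = U"
  using assms cyc_eq_if_mem unfolding cycles_def by blast

lemma ICR1_mem_cycles: "U \<in> cycles k n \<Longrightarrow> y \<in> U \<Longrightarrow> ICR k 1 y \<in> U"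
  unfolding cycles_def using ICR1_in_cyc by blast

lemma dassign_mem_cycles:
  assumes "0 < k" "1 \<le> n" "U \<in> cycles k n" "y \<in> U"
  shows "dassign k root parent y = (depth root parent U + 1) mod k"
  using cyc_eq_if_mem_cycles[OF assms] by (simp add: dassign_def)

lemma last_ICR: "last (ICR k j s) = (hd s + j) mod k"
  by (simp add: ICR_def)

lemma ICR0_inv_ICR: "s \<noteq> [] \<Longrightarrow> ICR0_inv (ICR k j s) = ((hd s + j) mod k) # tl s"
  by (simp add: ICR0_inv_def ICR_def)

lemma ICR0_inv_ICR0:
  assumes "s \<in> words k n" "1 \<le> n"
  shows "ICR0_inv (ICR k 0 s) = s"
  using assms by (cases s) (auto simp: ICR0_inv_ICR words_def)

lemma ICR1_ICR0_inv_ICR1: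
  assumes "s \<noteq> []"
  shows "ICR k 1 (ICR0_inv (ICR k 1 s)) = ICR k 2 s"
  using assms by (simp add: ICR0_inv_ICR) (simp add: ICR_def mod_simps)

lemma valid_arc_ICR_iff:
  assumes "0 < k" "1 \<le> n" "s \<in> words k n"
  shows "valid_arc k n d s (ICR k j s) \<longleftrightarrow>
    ((hd s + 1) mod k = (hd s + j) mod k \<and> d s = d (ICR k j s)) \<or>
    ((hd s + 1) mod k = d (ICR k j s) \<and> (hd s + j) mod k = d s)"
proof -
  obtain a as where s: "s = a # as" "length as = n - 1"
    using assms(2,3) by (cases s) (auto simp: words_def)
  have "dB_arc k n s (ICR k j s)"
    using assms(3) ICR_in_words[OF assms] s by (simp add: dB_arc_def ICR_def)
  moreover have "ICR k j s ! (n - 1) = (hd s + j) mod k"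
    using s by (simp add: ICR_def nth_append)
  ultimately show ?thesis
    using s by (simp add: valid_arc_def Let_def)
qed

lemma valid_arc_ICR1:
  assumes "0 < k" "1 \<le> n" "s \<in> words k n"
  shows "valid_arc k n (dassign k root parent) s (ICR k 1 s)"
  using assms cyc_ICR1 by (simp add: valid_arc_ICR_iff dassign_def)

locale ICR_spanning_tree =
  fixes k n :: nat
    and root :: "nat list set"
    and parent :: "nat list set \<Rightarrow> nat list set"
    and rep :: "nat list set \<Rightarrow> nat list"
  assumes k_pos: "0 < k"
    and n_pos: "1 \<le> n"
    and tree: "spanning_tree k n root parent"
    and reps: "valid_reps k n root parent rep"
begin

lemma parent_in_cycles: "U \<in> cycles k n \<Longrightarrow> U \<noteq> root \<Longrightarrow> parent U \<in> cycles k n"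
  using tree by (simp add: spanning_tree_def)

lemma depth_parent:
  assumes U: "U \<in> cycles k n" "U \<noteq> root"
  shows "depth root parent U = Suc (depth root parent (parent U))"
proof -
  let ?reaches = "\<lambda>V m. (parent ^^ m) V = root"
  have reaches_depth: "?reaches V (depth root parent V)" if V: "V \<in> cycles k n" for V
  proof -
    obtain m where "?reaches V m"
      using tree V by (auto simp: spanning_tree_def)
    then show ?thesis
      unfolding depth_def by (rule LeastI)
  qed
  have "?reaches U (Suc (depth root parent (parent U)))"
    using reaches_depth[OF parent_in_cycles[OF U]] by (simp only: funpow_Suc_right o_apply)
  then have le: "depth root parent U \<le> Suc (depth root parent (parent U))"
    unfolding depth_def by (rule Least_le)
  obtain e where e: "depth root parent U = Suc e"
    using reaches_depth[OF U(1)] U(2) by (cases "depth root parent U") auto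
  then have "?reaches (parent U) e"
    using reaches_depth[OF U(1)] by (simp only: funpow_Suc_right o_apply)
  then have "depth root parent (parent U) \<le> e"
    unfolding depth_def by (rule Least_le)
  with le e show ?thesis
    by simp
qed

lemma
  assumes "V \<in> cycles k n" "V \<noteq> root"
  shows rep_in_cycle: "rep V \<in> V"
    and ICR0_inv_rep_in_parent: "ICR0_inv (rep V) \<in> parent V"
    and last_rep: "last (rep V) = depth root parent V mod k"
  using reps assms by (simp_all add: valid_reps_def)

lemma dassign_cycle_of_rep:
  assumes "V \<in> cycles k n" "V \<noteq> root" "y \<in> V"
  shows "dassign k root parent y = (last (rep V) + 1) mod k"
  using assms k_pos n_pos by (simp add: dassign_mem_cycles last_rep mod_simps)

lemma dassign_parent_of_rep:
  assumes "V \<in> cycles k n" "V \<noteq> root" "y \<in> parent V"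
  shows "dassign k root parent y = last (rep V)"
  using assms dassign_mem_cycles[OF k_pos n_pos parent_in_cycles[OF assms(1,2)]]
  by (simp add: last_rep depth_parent)

lemma valid_arc_onto_rep:
  assumes s: "s \<in> words k n" and t: "ICR k 0 s \<in> Reps k n root rep"
  shows "valid_arc k n (dassign k root parent) s (ICR k 0 s)"
proof -
  obtain V where "ICR k 0 s = rep V" and "V \<in> cycles k n - {root}"
    using t unfolding Reps_def by (rule imageE)
  then have V: "V \<in> cycles k n" "V \<noteq> root" and rep_eq: "rep V = ICR k 0 s"
    by simp_all
  have "s \<in> parent V"
    using ICR0_inv_rep_in_parent[OF V] ICR0_inv_ICR0[OF s n_pos] rep_eq by simp
  then have d_s: "dassign k root parent s = (hd s + 0) mod k"
    using dassign_parent_of_rep[OF V] rep_eq by (simp add: last_ICR)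
  have d_t: "dassign k root parent (ICR k 0 s) = (hd s + 1) mod k"
    using dassign_cycle_of_rep[OF V rep_in_cycle[OF V]] rep_eq by (simp add: last_ICR mod_simps)
  show ?thesis
    using k_pos n_pos s d_s d_t by (simp add: valid_arc_ICR_iff)
qed

lemma valid_arc_past_rep:
  assumes s: "s \<in> words k n" and t: "ICR k 1 s \<in> Reps k n root rep"
  shows "valid_arc k n (dassign k root parent) s (ICR k 2 s)"
proof -
  obtain V where "ICR k 1 s = rep V" and "V \<in> cycles k n - {root}"
    using t unfolding Reps_def by (rule imageE)
  then have V: "V \<in> cycles k n" "V \<noteq> root" and rep_eq: "rep V = ICR k 1 s"
    by simp_all
  have "cyc k s = V"
    using cyc_ICR1[OF k_pos n_pos s] rep_eq
      cyc_eq_if_mem_cycles[OF k_pos n_pos V(1) rep_in_cycle[OF V]]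
    by simp
  then have d_s: "dassign k root parent s = (hd s + 2) mod k"
    using dassign_cycle_of_rep[OF V] self_in_cyc[of s k] rep_eq by (simp add: last_ICR mod_simps)
  have s_ne: "s \<noteq> []"
    using s n_pos by (auto simp: words_def)
  have "ICR k 2 s \<in> parent V"
    using ICR1_mem_cycles[OF parent_in_cycles[OF V] ICR0_inv_rep_in_parent[OF V]]
    unfolding rep_eq ICR1_ICR0_inv_ICR1[OF s_ne] .
  then have d_t: "dassign k root parent (ICR k 2 s) = (hd s + 1) mod k"
    using dassign_parent_of_rep[OF V] rep_eq by (simp add: last_ICR)
  show ?thesis
    using k_pos n_pos s d_s d_t by (simp add: valid_arc_ICR_iff)
qed

end

theorem lemma12:
  fixes k n :: nat
    and root :: "nat list set"
    and parent :: "nat list set \<Rightarrow> nat list set"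
    and rep :: "nat list set \<Rightarrow> nat list"
    and s :: "nat list"
  assumes "k \<ge> 2" and "n \<ge> 1"
    and "spanning_tree k n root parent"
    and "valid_reps k n root parent rep"
    and "s \<in> words k n"
  shows "valid_arc k n (dassign k root parent) s (Rsucc k n root rep s)"
proof -
  interpret ICR_spanning_tree k n root parent rep
    using assms(1-4) by unfold_locales auto
  show ?thesis
    using valid_arc_onto_rep[OF assms(5)] valid_arc_past_rep[OF assms(5)]
      valid_arc_ICR1[OF k_pos n_pos assms(5)]
    by (simp add: Rsucc_def)
qed

end
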